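(* Let $\lambda>0$ and $\mu=\nu>0$, and equip $S^3$ with the generalised Berger metric $g$ described in the context. For $\theta\in(0,\pi/2)$ let $T^2_\theta\subset S^3$ be the torus $\{(\cos\theta\, e^{i\alpha},\sin\theta\, e^{i\beta}):\alpha,\beta\in\mathbb R\}$, and let $H_g$ be its mean curvature vector in $(S^3,g)$. Then for every real number $C\ge 0$ there exists $\theta\in(0,\pi/2)$ such that the mean curvature of $T^2_\theta$ is constant with $\|H_g\|\equiv C$. For $C=0$ such a torus in this family is unique, and for $C>0$ there exist exactly two such tori in this family.
   Context: $S^3=\{(z,w)\in\mathbb C^2: |z|^2+|w|^2=1\}$ is a Lie group with multiplication $(z_1,w_1)\cdot(z_2,w_2)=(z_1z_2-\bar w_1w_2,\ \bar z_1w_2+w_1z_2)$ and inverse $(z,w)^{-1}=(\bar z,-w)$; the same formula defines $p\cdot v$ for $v\in\mathbb C^2$. Let $\langle (z_1,w_1),(z_2,w_2)\rangle=\mathrm{Re}(z_1\bar z_2+w_1\bar w_2)$. For $\lambda,\mu,\nu>0$ the left-invariant Riemannian metric $g$ is $g_p(A,B)=\lambda^2\langle p^{-1}A,(i,0)\rangle\langle p^{-1}B,(i,0)\rangle+\mu^2\langle p^{-1}A,(0,-1)\rangle\langle p^{-1}B,(0,-1)\rangle+\nu^2\langle p^{-1}A,(0,i)\rangle\langle p^{-1}B,(0,i)\rangle+\langle p^{-1}A,(1,0)\rangle\langle p^{-1}B,(1,0)\rangle$ for $A,B\in T_pS^3$. For a surface $T$ in $(S^3,g)$ with $g$-orthonormal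 tangent basis $V_1,V_2$ at $p$, the mean curvature vector is $H_g=\tfrac12(B(V_1,V_1)+B(V_2,V_2))$, where $B$ is the second fundamental form (normal component of the covariant derivative), and $\|H_g\|=\sqrt{g(H_g,H_g)}$. *)

theory Defs
  imports "HOL-Analysis.Analysis"
begin

type_synonym quat = "complex \<times> complex"

definition qmul :: "quat \<Rightarrow> quat \<Rightarrow> quat" where
  "qmul p q = (fst p * fst q - cnj (snd p) * snd q, cnj (fst p) * snd q + snd p * fst q)"

definition qinv :: "quat \<Rightarrow> quat" where
  "qinv p = (cnj (fst p), - snd p)"

definition qinner :: "quat \<Rightarrow> quat \<Rightarrow> real" where
  "qinner a b = Re (fst a * cnj (fst b) + snd a * cnj (snd b))"

definition S3 :: "quat set" where
  "S3 = {(z, w). (cmod z)^2 + (cmod w)^2 = 1}"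

definition berger_metric :: "real \<Rightarrow> real \<Rightarrow> real \<Rightarrow> quat \<Rightarrow> quat \<Rightarrow> quat \<Rightarrow> real" where
  "berger_metric la mu nu p A B =
      la^2 * qinner (qmul (qinv p) A) (\<i>, 0) * qinner (qmul (qinv p) B) (\<i>, 0)
    + mu^2 * qinner (qmul (qinv p) A) (0, -1) * qinner (qmul (qinv p) B) (0, -1)
    + nu^2 * qinner (qmul (qinv p) A) (0, \<i>) * qinner (qmul (qinv p) B) (0, \<i>)
    + qinner (qmul (qinv p) A) (1, 0) * qinner (qmul (qinv p) B) (1, 0)"

definition pd :: "(real^'n \<Rightarrow> 'b::real_normed_vector) \<Rightarrow> real^'n \<Rightarrow> 'n \<Rightarrow> 'b" where
  "pd f x k = vector_derivative (\<lambda>s. f (x + s *\<^sub>R axis k 1)) (at 0)"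

definition gcoord :: "(quat \<Rightarrow> quat \<Rightarrow> quat \<Rightarrow> real) \<Rightarrow> (real^3 \<Rightarrow> quat) \<Rightarrow> real^3 \<Rightarrow> 3 \<Rightarrow> 3 \<Rightarrow> real" where
  "gcoord G phi x i j = G (phi x) (pd phi x i) (pd phi x j)"

definition gmat :: "(quat \<Rightarrow> quat \<Rightarrow> quat \<Rightarrow> real) \<Rightarrow> (real^3 \<Rightarrow> quat) \<Rightarrow> real^3 \<Rightarrow> real^3^3" where
  "gmat G phi x = (\<chi> i j. gcoord G phi x i j)"

definition christoffel :: "(quat \<Rightarrow> quat \<Rightarrow> quat \<Rightarrow> real) \<Rightarrow> (real^3 \<Rightarrow> quat) \<Rightarrow> real^3 \<Rightarrow> 3 \<Rightarrow> 3 \<Rightarrow> 3 \<Rightarrow> real" where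
  "christoffel G phi x k i j = 1/2 * (\<Sum>l\<in>UNIV. matrix_inv (gmat G phi x) $ k $ l *
      (pd (\<lambda>y. gcoord G phi y j l) x i + pd (\<lambda>y. gcoord G phi y i l) x j
       - pd (\<lambda>y. gcoord G phi y i j) x l))"

definition push :: "(real^3 \<Rightarrow> quat) \<Rightarrow> real^3 \<Rightarrow> real^3 \<Rightarrow> quat" where
  "push phi x v = (\<Sum>k\<in>UNIV. (v $ k) *\<^sub>R pd phi x k)"

text \<open>A surface is given in chart coordinates by sg : R^2 -> R^3.  Its coordinate
  tangent fields at parameter y, pushed to C^2.\<close>
definition sframe :: "(real^3 \<Rightarrow> quat) \<Rightarrow> (real^2 \<Rightarrow> real^3) \<Rightarrow> real^2 \<Rightarrow> 2 \<Rightarrow> quat" where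
  "sframe phi sg y a = push phi (sg y) (pd sg y a)"

definition covd :: "(quat \<Rightarrow> quat \<Rightarrow> quat \<Rightarrow> real) \<Rightarrow> (real^3 \<Rightarrow> quat) \<Rightarrow> (real^2 \<Rightarrow> real^3) \<Rightarrow> real^2 \<Rightarrow> 2 \<Rightarrow> 2 \<Rightarrow> real^3" where
  "covd G phi sg y a b = (\<chi> k. pd (\<lambda>z. pd sg z b) y a $ k
      + (\<Sum>i\<in>UNIV. \<Sum>j\<in>UNIV. christoffel G phi (sg y) k i j * (pd sg y a $ i) * (pd sg y b $ j)))"

definition normal_part :: "(quat \<Rightarrow> quat \<Rightarrow> quat \<Rightarrow> real) \<Rightarrow> quat \<Rightarrow> (2 \<Rightarrow> quat) \<Rightarrow> quat \<Rightarrow> quat" where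
  "normal_part G p E Y = (THE N. (\<forall>a. G p N (E a) = 0) \<and> (\<exists>c::real^2. Y - N = (\<Sum>a\<in>UNIV. (c $ a) *\<^sub>R E a)))"

definition sff :: "(quat \<Rightarrow> quat \<Rightarrow> quat \<Rightarrow> real) \<Rightarrow> (real^3 \<Rightarrow> quat) \<Rightarrow> (real^2 \<Rightarrow> real^3) \<Rightarrow> real^2 \<Rightarrow> 2 \<Rightarrow> 2 \<Rightarrow> quat" where
  "sff G phi sg y a b = normal_part G (phi (sg y)) (sframe phi sg y)
      (push phi (sg y) (covd G phi sg y a b))"

text \<open>Mean curvature vector H = 1/2 (B(V1,V1) + B(V2,V2)) for tangent vectors
  V1 = sum c_a e_a, V2 = sum d_a e_a (B extended bilinearly).\<close>
definition mean_curv :: "(quat \<Rightarrow> quat \<Rightarrow> quat \<Rightarrow> real) \<Rightarrow> (real^3 \<Rightarrow> quat) \<Rightarrow> (real^2 \<Rightarrow> real^3) \<Rightarrow> real^2 \<Rightarrow> real^2 \<Rightarrow> real^2 \<Rightarrow> quat" where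
  "mean_curv G phi sg y c d = (1/2) *\<^sub>R (\<Sum>a\<in>UNIV. \<Sum>b\<in>UNIV.
      (c $ a * c $ b + d $ a * d $ b) *\<^sub>R sff G phi sg y a b)"

definition const_mean_curv_norm :: "(quat \<Rightarrow> quat \<Rightarrow> quat \<Rightarrow> real) \<Rightarrow> (real^3 \<Rightarrow> quat) \<Rightarrow> (real^2 \<Rightarrow> real^3) \<Rightarrow> real \<Rightarrow> bool" where
  "const_mean_curv_norm G phi sg C \<longleftrightarrow>
    (\<forall>y c d. let p = phi (sg y);
                 V1 = (\<Sum>a\<in>UNIV. (c $ a) *\<^sub>R sframe phi sg y a);
                 V2 = (\<Sum>a\<in>UNIV. (d $ a) *\<^sub>R sframe phi sg y a)
             in G p V1 V1 = 1 \<and> G p V2 V2 = 1 \<and> G p V1 V2 = 0 \<longrightarrow>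
                sqrt (G p (mean_curv G phi sg y c d) (mean_curv G phi sg y c d)) = C)"

text \<open>Chart (t, alpha, beta) |-> (cos t e^{i alpha}, sin t e^{i beta}) of S^3, a local
  diffeomorphism on (0, pi/2) x R x R.\<close>
definition hopf_chart :: "real^3 \<Rightarrow> quat" where
  "hopf_chart x = (complex_of_real (cos (x $ 1)) * cis (x $ 2), complex_of_real (sin (x $ 1)) * cis (x $ 3))"

definition torus_param :: "real \<Rightarrow> real^2 \<Rightarrow> real^3" where
  "torus_param theta y = vector [theta, y $ 1, y $ 2]"


end

theory Submission
  imports Defs
begin

text \<open>In the Hopf coordinates (t, \<alpha>, \<beta>), left translation to the identity sends the coordinate
  fields to \<partial>t \<mapsto> (0, e^(i(\<alpha>+\<beta>))), \<partial>\<alpha> \<mapsto> (i cos^2 t, -i sin t cos t e^(i(\<alpha>+\<beta>))) and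
  \<partial>\<beta> \<mapsto> (i sin^2 t, i sin t cos t e^(i(\<alpha>+\<beta>))). Hence for \<nu> = \<mu> the metric coefficients g_ij
  depend on t only, and \<partial>t has length \<mu> and is orthogonal to the tori t = \<theta>. The second
  fundamental form of T_\<theta> is B(\<partial>_a, \<partial>_b) = -g_ab'(\<theta>)/(2\<mu>^2) \<partial>t, so tracing it over an
  orthonormal frame gives H = -tr(g_T^-1 g_T')/(4\<mu>^2) \<partial>t = -(log det g_T)'/(4\<mu>^2) \<partial>t. With
  det g_T = \<lambda>^2 \<mu>^2 sin^2 \<theta> cos^2 \<theta> this is \<parallel>H\<parallel> = |cot 2\<theta>|/\<mu>, independently of \<lambda>. Since
  cot 2\<theta> decreases from +\<infinity> to -\<infinity> on (0, \<pi>/2), the equation |cot 2\<theta>| = \<mu>C has the single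
  solution \<pi>/4 for C = 0 and the two solutions (\<pi>/2 \<mp> arctan (\<mu>C))/2 for C > 0.\<close>

section \<open>Linear algebra and trigonometry\<close>

lemma matrix_inv_row_eq:
  fixes A :: "'a::field^'n^'n"
  assumes "invertible A" and row: "\<And>k. k \<noteq> i \<Longrightarrow> A $ i $ k = 0"
  shows "matrix_inv A $ i $ l = (if l = i then 1 / A $ i $ i else 0)"
proof -
  let ?M = "matrix_inv A"
  have "A ** ?M = mat 1"
    using assms(1) unfolding invertible_def matrix_inv_def by (rule someI_ex[THEN conjunct1])
  then have "(A ** ?M) $ i $ l = (if i = l then 1 else 0)" for l
    by (simp add: mat_def)
  moreover have "(A ** ?M) $ i $ l = A $ i $ i * ?M $ i $ l" for l
  proof -
    have "(\<Sum>k\<in>UNIV. A $ i $ k * ?M $ k $ l) = (\<Sum>k\<in>UNIV. if k = i then A $ i $ i * ?M $ i $ l else 0)"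
      by (rule sum.cong) (auto simp: row)
    then show ?thesis
      by (simp add: matrix_matrix_mult_def)
  qed
  ultimately have diag: "A $ i $ i * ?M $ i $ l = (if i = l then 1 else 0)" for l
    by simp
  then have "A $ i $ i \<noteq> 0"
    by (metis one_neq_zero mult_zero_left)
  then show ?thesis
    using diag[of l] diag[of i] by (auto simp: field_simps)
qed

lemma sum_mult_axis: "(\<Sum>i\<in>UNIV. f i * (axis k 1 $ i)) = (f k :: 'a::comm_ring_1)"
proof -
  have "(\<Sum>i\<in>UNIV. f i * (axis k 1 $ i)) = (\<Sum>i\<in>UNIV. if i = k then f i else 0)"
    by (rule sum.cong) (simp_all add: axis_def)
  then show ?thesis by simp
qed

lemma sum_axis_scaleR: "(\<Sum>i\<in>UNIV. (axis k 1 $ i) *\<^sub>R f i) = (f k :: 'a::real_vector)"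
proof -
  have "(\<Sum>i\<in>UNIV. (axis k 1 $ i) *\<^sub>R f i) = (\<Sum>i\<in>UNIV. if i = k then f i else 0)"
    by (rule sum.cong) (simp_all add: axis_def)
  then show ?thesis by simp
qed

text \<open>For an M-orthonormal pair (c, d) one has c c^T + d d^T = M^-1, so the sum is tr(M^-1 N).\<close>

lemma orthonormal_pair_trace:
  fixes M N :: "real^2^2" and c d :: "real^2"
  assumes sym: "M$1$2 = M$2$1" "N$1$2 = N$2$1"
    and cc: "(\<Sum>a\<in>UNIV. \<Sum>b\<in>UNIV. c$a * c$b * M$a$b) = 1"
    and dd: "(\<Sum>a\<in>UNIV. \<Sum>b\<in>UNIV. d$a * d$b * M$a$b) = 1"
    and cd: "(\<Sum>a\<in>UNIV. \<Sum>b\<in>UNIV. c$a * d$b * M$a$b) = 0"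
  shows "(\<Sum>a\<in>UNIV. \<Sum>b\<in>UNIV. (c$a * c$b + d$a * d$b) * N$a$b) =
    (N$1$1 * M$2$2 - 2 * N$1$2 * M$1$2 + N$2$2 * M$1$1) / det M"
proof -
  let ?w = "c$1 * d$2 - c$2 * d$1"
  have w: "?w^2 * det M = 1"
    using cc dd cd unfolding det_2 sum_2 sym(1)[symmetric] by algebra
  have trace: "(\<Sum>a\<in>UNIV. \<Sum>b\<in>UNIV. (c$a * c$b + d$a * d$b) * N$a$b) =
      ?w^2 * (N$1$1 * M$2$2 - 2 * N$1$2 * M$1$2 + N$2$2 * M$1$1)"
    using cc dd cd unfolding sum_2 sym[symmetric] by algebra
  have "det M \<noteq> 0"
    using w by auto
  then have "?w^2 = 1 / det M"
    using w by (simp add: eq_divide_eq)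
  then show ?thesis
    unfolding trace by simp
qed

lemma exists_orthonormal_pair:
  fixes M :: "real^2^2"
  assumes sym: "M$1$2 = M$2$1" and pos: "M$1$1 > 0" "det M > 0"
  shows "\<exists>c d :: real^2. (\<Sum>a\<in>UNIV. \<Sum>b\<in>UNIV. c$a * c$b * M$a$b) = 1
    \<and> (\<Sum>a\<in>UNIV. \<Sum>b\<in>UNIV. d$a * d$b * M$a$b) = 1
    \<and> (\<Sum>a\<in>UNIV. \<Sum>b\<in>UNIV. c$a * d$b * M$a$b) = 0"
proof -
  define r where "r = sqrt (M$1$1 * det M)"
  have r: "r > 0" "r * r = M$1$1 * det M"
    using pos by (simp_all add: r_def)
  have s: "sqrt (M$1$1) * sqrt (M$1$1) = M$1$1"
    using pos by simp
  show ?thesis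
  proof (intro exI conjI)
    show "(\<Sum>a\<in>UNIV. \<Sum>b\<in>UNIV. vector [1 / sqrt (M$1$1), 0] $ a * vector [1 / sqrt (M$1$1), 0] $ b * M$a$b) = 1"
      using pos s by (simp add: sum_2 field_simps)
    show "(\<Sum>a\<in>UNIV. \<Sum>b\<in>UNIV. vector [- M$1$2 / r, M$1$1 / r] $ a * vector [- M$1$2 / r, M$1$1 / r] $ b * M$a$b) = 1"
      using r sym pos unfolding det_2 by (simp add: sum_2 field_simps power2_eq_square)
    show "(\<Sum>a\<in>UNIV. \<Sum>b\<in>UNIV. vector [1 / sqrt (M$1$1), 0] $ a * vector [- M$1$2 / r, M$1$1 / r] $ b * M$a$b) = 0"
      using r sym pos by (simp add: sum_2 field_simps)
  qed
qed

lemma cis_mult_cnj: "cis a * cnj (cis a) = 1"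
  by (simp add: cis_cnj cis_mult)

lemma of_real_cos_sin_squared: "complex_of_real (cos t) ^ 2 + complex_of_real (sin t) ^ 2 = 1"
  by (simp flip: of_real_power of_real_add)

lemma has_vector_derivative_cis [derivative_intros]:
  assumes "(f has_real_derivative f') (at s within A)"
  shows "((\<lambda>s. cis (f s)) has_vector_derivative (f' *\<^sub>R (\<i> * cis (f s)))) (at s within A)"
  using has_derivative_cis[OF assms[unfolded has_field_derivative_def]]
  unfolding has_vector_derivative_def by (simp add: mult.commute)

lemma cot_double: "sin t \<noteq> 0 \<Longrightarrow> cos t \<noteq> 0 \<Longrightarrow> cot (2 * t) = (cos t ^ 2 - sin t ^ 2) / (2 * sin t * cos t)"
  by (simp add: cot_def cos_double sin_double)

lemma abs_cot_double_solutions: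
  assumes "k \<ge> 0"
  shows "{theta \<in> {0<..<pi/2}. \<bar>cot (2 * theta)\<bar> = k} = {(pi/2 - arctan k) / 2, (pi/2 + arctan k) / 2}"
proof (intro set_eqI iffI)
  fix theta assume "theta \<in> {theta \<in> {0<..<pi/2}. \<bar>cot (2 * theta)\<bar> = k}"
  then have theta: "0 < theta" "theta < pi/2" and "cot (2 * theta) = k \<or> cot (2 * theta) = - k"
    by auto
  moreover have "arctan (cot (2 * theta)) = pi/2 - 2 * theta"
    using theta by (simp add: tan_cot'[symmetric] arctan_tan)
  ultimately show "theta \<in> {(pi/2 - arctan k) / 2, (pi/2 + arctan k) / 2}"
    by (auto simp: arctan_minus)
next
  fix theta assume "theta \<in> {(pi/2 - arctan k) / 2, (pi/2 + arctan k) / 2}"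
  then consider "pi/2 - 2 * theta = arctan k" | "pi/2 - 2 * theta = - arctan k"
    by (auto simp: field_simps)
  then have "\<bar>tan (pi/2 - 2 * theta)\<bar> = k" and "\<bar>pi/2 - 2 * theta\<bar> < pi/2"
    using assms arctan_bounded[of k] by (cases; simp add: tan_arctan)+
  then show "theta \<in> {theta \<in> {0<..<pi/2}. \<bar>cot (2 * theta)\<bar> = k}"
    unfolding abs_less_iff by (auto simp: tan_cot')
qed

section \<open>The Berger metric on S^3\<close>

lemma linear_qmul: "linear (qmul q)"
  by (rule linearI) (simp_all add: qmul_def algebra_simps scaleR_conv_of_real)

lemma berger_metric_Re_Im:
  "berger_metric la mu nu p A B =
       la^2 * Im (fst (qmul (qinv p) A)) * Im (fst (qmul (qinv p) B))
     + mu^2 * Re (snd (qmul (qinv p) A)) * Re (snd (qmul (qinv p) B))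
     + nu^2 * Im (snd (qmul (qinv p) A)) * Im (snd (qmul (qinv p) B))
     + Re (fst (qmul (qinv p) A)) * Re (fst (qmul (qinv p) B))"
  by (simp add: berger_metric_def qinner_def)

lemma bilinear_berger_metric: "bilinear (berger_metric la mu nu p)"
  unfolding bilinear_def linear_iff berger_metric_Re_Im
  by (simp add: linear_add[OF linear_qmul] linear_scale[OF linear_qmul] algebra_simps)

lemma qmul_qinv_cancel_left:
  assumes "p \<in> S3"
  shows "qmul p (qmul (qinv p) v) = v"
proof -
  obtain z w where p: "p = (z, w)" by fastforce
  obtain a b where v: "v = (a, b)" by fastforce
  have "z * cnj z + w * cnj w = 1"
    using assms unfolding p S3_def cmod_power2 by (simp add: complex_eq_iff power2_eq_square)
  moreover have "qmul p (qmul (qinv p) v) = ((z * cnj z + w * cnj w) * a, (z * cnj z + w * cnj w) * b)"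
    unfolding p v by (simp add: qmul_def qinv_def algebra_simps)
  ultimately show ?thesis using v by simp
qed

lemma berger_metric_pos_def:
  assumes "la \<noteq> 0" "mu \<noteq> 0" "nu \<noteq> 0" "p \<in> S3" "berger_metric la mu nu p v v = 0"
  shows "v = 0"
proof -
  obtain a b where ab: "qmul (qinv p) v = (a, b)" by fastforce
  have "(la * Im a)^2 + (mu * Re b)^2 + (nu * Im b)^2 + (Re a)^2 = 0"
    using assms(5) unfolding berger_metric_Re_Im ab by (simp add: power2_eq_square algebra_simps)
  then have "a = 0" "b = 0"
    using assms(1-3) by (auto simp: complex_eq_iff add_nonneg_eq_0_iff)
  then show ?thesis
    using qmul_qinv_cancel_left[OF assms(4), of v] ab linear_0[OF linear_qmul] by (simp add: zero_prod_def)
qed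

lemma normal_part_unique:
  fixes G :: "quat \<Rightarrow> quat \<Rightarrow> quat \<Rightarrow> real" and E :: "2 \<Rightarrow> quat"
  assumes bil: "bilinear (G p)" and pos: "\<And>v. G p v v = 0 \<Longrightarrow> v = 0"
    and orth: "\<forall>a. G p N (E a) = 0" and span: "\<exists>c::real^2. Y - N = (\<Sum>a\<in>UNIV. (c $ a) *\<^sub>R E a)"
  shows "normal_part G p E Y = N"
  unfolding normal_part_def
proof (rule the_equality)
  show "(\<forall>a. G p N (E a) = 0) \<and> (\<exists>c::real^2. Y - N = (\<Sum>a\<in>UNIV. (c $ a) *\<^sub>R E a))"
    using orth span by blast
  have orth_span: "G p X (\<Sum>a\<in>UNIV. (c $ a) *\<^sub>R E a) = 0" if "\<forall>a. G p X (E a) = 0" for X c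
  proof -
    interpret linear "G p X" using bil unfolding bilinear_def by blast
    show ?thesis using that by (simp add: sum scale)
  qed
  fix N' assume N': "(\<forall>a. G p N' (E a) = 0) \<and> (\<exists>c::real^2. Y - N' = (\<Sum>a\<in>UNIV. (c $ a) *\<^sub>R E a))"
  obtain c c' :: "real^2" where c: "Y - N = (\<Sum>a\<in>UNIV. (c $ a) *\<^sub>R E a)"
    and c': "Y - N' = (\<Sum>a\<in>UNIV. (c' $ a) *\<^sub>R E a)"
    using span N' by blast
  have diff: "N' - N = (\<Sum>a\<in>UNIV. ((c - c') $ a) *\<^sub>R E a)"
    by (simp add: scaleR_diff_left sum_subtractf flip: c c')
  have "G p N' (N' - N) = 0" "G p N (N' - N) = 0"
    unfolding diff using orth_span[of N' "c - c'"] orth_span[of N "c - c'"] orth N' by blast+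
  then have "G p (N' - N) (N' - N) = 0"
    by (simp add: bilinear_lsub[OF bil])
  then show "N' = N" using pos[of "N' - N"] by simp
qed

section \<open>Hopf coordinates\<close>

lemma pd_eqI: "((\<lambda>s. f (x + s *\<^sub>R axis k 1)) has_vector_derivative v) (at 0) \<Longrightarrow> pd f x k = v"
  by (simp add: pd_def vector_derivative_at)

lemma pd_const: "pd (\<lambda>z. c) x k = 0"
  by (rule pd_eqI) (rule has_vector_derivative_const)

lemma hopf_chart_in_S3: "hopf_chart x \<in> S3"
  by (simp add: S3_def hopf_chart_def norm_mult)

lemma pd_hopf_chart:
  "pd hopf_chart x 1 = (- of_real (sin (x$1)) * cis (x$2), of_real (cos (x$1)) * cis (x$3))"
  "pd hopf_chart x 2 = (\<i> * of_real (cos (x$1)) * cis (x$2), 0)"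
  "pd hopf_chart x 3 = (0, \<i> * of_real (sin (x$1)) * cis (x$3))"
  by (rule pd_eqI, simp add: hopf_chart_def axis_def,
      (rule derivative_eq_intros refl | simp add: algebra_simps)+)+

lemma qmul_qinv_hopf_chart:
  "qmul (qinv (hopf_chart x)) (u, v) =
     (of_real (cos (x$1)) * cnj (cis (x$2)) * u + of_real (sin (x$1)) * cnj (cis (x$3)) * v,
      of_real (cos (x$1)) * cis (x$2) * v - of_real (sin (x$1)) * cis (x$3) * u)"
  by (simp add: qmul_def qinv_def hopf_chart_def)

lemma hopf_frame_left_translated:
  "qmul (qinv (hopf_chart x)) (pd hopf_chart x 1) = (0, cis (x$2 + x$3))"
  "qmul (qinv (hopf_chart x)) (pd hopf_chart x 2) =
     (\<i> * of_real (cos (x$1)) ^ 2, - \<i> * of_real (sin (x$1)) * of_real (cos (x$1)) * cis (x$2 + x$3))"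
  "qmul (qinv (hopf_chart x)) (pd hopf_chart x 3) =
     (\<i> * of_real (sin (x$1)) ^ 2, \<i> * of_real (sin (x$1)) * of_real (cos (x$1)) * cis (x$2 + x$3))"
  unfolding pd_hopf_chart qmul_qinv_hopf_chart cis_mult[symmetric]
  using cis_mult_cnj[of "x$2"] cis_mult_cnj[of "x$3"] of_real_cos_sin_squared[of "x$1"]
  by (simp only: prod.inject, intro conjI; (algebra | simp add: algebra_simps))+

definition berger_hopf_gram :: "real \<Rightarrow> real \<Rightarrow> real \<Rightarrow> real^3^3" where
  "berger_hopf_gram la mu t =
     vector [vector [mu^2, 0, 0],
             vector [0, la^2 * cos t ^ 4 + mu^2 * sin t ^ 2 * cos t ^ 2, (la^2 - mu^2) * sin t ^ 2 * cos t ^ 2],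
             vector [0, (la^2 - mu^2) * sin t ^ 2 * cos t ^ 2, la^2 * sin t ^ 4 + mu^2 * sin t ^ 2 * cos t ^ 2]]"

definition berger_hopf_gram_deriv :: "real \<Rightarrow> real \<Rightarrow> real \<Rightarrow> real^3^3" where
  "berger_hopf_gram_deriv la mu t =
     vector [vector [0, 0, 0],
             vector [0, - 4 * la^2 * sin t * cos t ^ 3 + mu^2 * (2 * sin t * cos t ^ 3 - 2 * sin t ^ 3 * cos t),
                     (la^2 - mu^2) * (2 * sin t * cos t ^ 3 - 2 * sin t ^ 3 * cos t)],
             vector [0, (la^2 - mu^2) * (2 * sin t * cos t ^ 3 - 2 * sin t ^ 3 * cos t),
                     4 * la^2 * sin t ^ 3 * cos t + mu^2 * (2 * sin t * cos t ^ 3 - 2 * sin t ^ 3 * cos t)]]"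

definition torus_coord :: "2 \<Rightarrow> 3" where
  "torus_coord a = (if a = 1 then 2 else 3)"

definition torus_gram :: "real^3^3 \<Rightarrow> real^2^2" where
  "torus_gram M = (\<chi> a b. M $ torus_coord a $ torus_coord b)"

lemma berger_metric_hopf_frame:
  "berger_metric la mu mu (hopf_chart x) (pd hopf_chart x i) (pd hopf_chart x j) =
     berger_hopf_gram la mu (x$1) $ i $ j"
proof -
  have unit: "sin (x$2 + x$3) ^ 2 + cos (x$2 + x$3) ^ 2 = 1" by simp
  have "\<forall>i j. berger_metric la mu mu (hopf_chart x) (pd hopf_chart x i) (pd hopf_chart x j) =
     berger_hopf_gram la mu (x$1) $ i $ j"
    unfolding forall_3
    by (simp add: berger_metric_Re_Im hopf_frame_left_translated berger_hopf_gram_def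
        power2_eq_square[symmetric], intro conjI; use unit in algebra)
  then show ?thesis by blast
qed

lemma gmat_berger_hopf: "gmat (berger_metric la mu mu) hopf_chart x = berger_hopf_gram la mu (x$1)"
  by (simp add: gmat_def gcoord_def berger_metric_hopf_frame vec_eq_iff)

lemma has_real_derivative_berger_hopf_gram:
  "((\<lambda>t. berger_hopf_gram la mu t $ i $ j) has_real_derivative berger_hopf_gram_deriv la mu t $ i $ j) (at t)"
  using exhaust_3[of i] exhaust_3[of j]
  by (elim disjE) (auto simp: berger_hopf_gram_def berger_hopf_gram_deriv_def eval_nat_numeral algebra_simps
      intro!: derivative_eq_intros)

lemma berger_hopf_gram_normal_row_col:
  "berger_hopf_gram la mu t $ 1 $ j = (if j = 1 then mu^2 else 0)"
  "berger_hopf_gram la mu t $ j $ 1 = (if j = 1 then mu^2 else 0)"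
  "berger_hopf_gram_deriv la mu t $ 1 $ j = 0"
  "berger_hopf_gram_deriv la mu t $ j $ 1 = 0"
  using exhaust_3[of j] by (auto simp: berger_hopf_gram_def berger_hopf_gram_deriv_def)

lemma torus_gram_berger_hopf_commute:
  "torus_gram (berger_hopf_gram la mu t) $ 1 $ 2 = torus_gram (berger_hopf_gram la mu t) $ 2 $ 1"
  "torus_gram (berger_hopf_gram_deriv la mu t) $ 1 $ 2 = torus_gram (berger_hopf_gram_deriv la mu t) $ 2 $ 1"
  by (simp_all add: torus_gram_def torus_coord_def berger_hopf_gram_def berger_hopf_gram_deriv_def)

lemma det_torus_gram_berger_hopf:
  "det (torus_gram (berger_hopf_gram la mu t)) = la^2 * mu^2 * sin t ^ 2 * cos t ^ 2"
proof -
  have unit: "sin t ^ 2 + cos t ^ 2 = 1" by simp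
  show ?thesis
    unfolding det_2 torus_gram_def torus_coord_def berger_hopf_gram_def by simp (use unit in algebra)
qed

lemma det_berger_hopf_gram:
  "det (berger_hopf_gram la mu t) = mu^2 * det (torus_gram (berger_hopf_gram la mu t))"
  unfolding det_3 det_2 torus_gram_def torus_coord_def
  by (simp add: berger_hopf_gram_normal_row_col right_diff_distrib mult.assoc)

lemma invertible_berger_hopf_gram:
  assumes "la \<noteq> 0" "mu \<noteq> 0" "sin t \<noteq> 0" "cos t \<noteq> 0"
  shows "invertible (berger_hopf_gram la mu t)"
  using assms by (simp add: invertible_det_nz det_berger_hopf_gram det_torus_gram_berger_hopf)

lemma torus_gram_berger_hopf_pos:
  assumes "la \<noteq> 0" "mu \<noteq> 0" "sin t \<noteq> 0" "cos t \<noteq> 0"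
  shows "torus_gram (berger_hopf_gram la mu t) $ 1 $ 1 > 0" "det (torus_gram (berger_hopf_gram la mu t)) > 0"
proof -
  show "torus_gram (berger_hopf_gram la mu t) $ 1 $ 1 > 0"
    using assms by (simp add: torus_gram_def torus_coord_def berger_hopf_gram_def add_pos_nonneg)
  show "det (torus_gram (berger_hopf_gram la mu t)) > 0"
    using assms unfolding det_torus_gram_berger_hopf by simp
qed

text \<open>The left-hand side is tr(M^-1 N) = (log det M)'.\<close>

lemma berger_hopf_torus_log_det_deriv:
  assumes "la \<noteq> 0" "mu \<noteq> 0" "sin t \<noteq> 0" "cos t \<noteq> 0"
  defines "M \<equiv> torus_gram (berger_hopf_gram la mu t)" and "N \<equiv> torus_gram (berger_hopf_gram_deriv la mu t)"
  shows "(N$1$1 * M$2$2 - 2 * N$1$2 * M$1$2 + N$2$2 * M$1$1) / det M = 4 * cot (2 * t)"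
proof -
  have unit: "sin t ^ 2 + cos t ^ 2 = 1" by simp
  have numerator: "N$1$1 * M$2$2 - 2 * N$1$2 * M$1$2 + N$2$2 * M$1$1 =
      la^2 * mu^2 * (2 * sin t * cos t ^ 3 - 2 * sin t ^ 3 * cos t)"
    unfolding M_def N_def torus_gram_def torus_coord_def berger_hopf_gram_def berger_hopf_gram_deriv_def
    by simp (use unit in algebra)
  have det: "det M = la^2 * mu^2 * sin t ^ 2 * cos t ^ 2"
    unfolding M_def by (rule det_torus_gram_berger_hopf)
  show ?thesis
    using assms(1-4) unfolding numerator det cot_double[OF assms(3,4)]
    by (simp add: divide_simps power2_eq_square power3_eq_cube) algebra
qed

lemma pd_gcoord_berger_hopf:
  "pd (\<lambda>y. gcoord (berger_metric la mu mu) hopf_chart y i j) x k =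
     (if k = 1 then berger_hopf_gram_deriv la mu (x$1) $ i $ j else 0)"
proof (rule pd_eqI)
  have shift: "(\<lambda>s. gcoord (berger_metric la mu mu) hopf_chart (x + s *\<^sub>R axis k 1) i j) =
      (\<lambda>s. berger_hopf_gram la mu (x$1 + (if k = 1 then s else 0)) $ i $ j)"
    by (simp add: gcoord_def berger_metric_hopf_frame axis_def)
  have "((\<lambda>s. berger_hopf_gram la mu (x$1 + s) $ i $ j) has_real_derivative
      berger_hopf_gram_deriv la mu (x$1 + 0) $ i $ j * 1) (at 0)"
    by (rule DERIV_chain2[OF has_real_derivative_berger_hopf_gram]) (auto intro!: derivative_eq_intros)
  then show "((\<lambda>s. gcoord (berger_metric la mu mu) hopf_chart (x + s *\<^sub>R axis k 1) i j) has_vector_derivative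
      (if k = 1 then berger_hopf_gram_deriv la mu (x$1) $ i $ j else 0)) (at 0)"
    unfolding shift by (simp add: has_real_derivative_iff_has_vector_derivative)
qed

lemma christoffel_berger_hopf_normal:
  assumes "la \<noteq> 0" "mu \<noteq> 0" "sin (x$1) \<noteq> 0" "cos (x$1) \<noteq> 0"
  shows "christoffel (berger_metric la mu mu) hopf_chart x 1 i j =
    - berger_hopf_gram_deriv la mu (x$1) $ i $ j / (2 * mu^2)"
proof -
  have "berger_hopf_gram la mu (x$1) $ 1 $ k = 0" if "k \<noteq> 1" for k
    using that by (simp add: berger_hopf_gram_normal_row_col)
  note inv_row = matrix_inv_row_eq[OF invertible_berger_hopf_gram[OF assms] this]
  show ?thesis
    unfolding christoffel_def gmat_berger_hopf pd_gcoord_berger_hopf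
    by (simp add: inv_row sum_3 berger_hopf_gram_normal_row_col)
qed

section \<open>The tori\<close>

lemma torus_param_nth_1 [simp]: "torus_param theta y $ 1 = theta"
  by (simp add: torus_param_def)

lemma pd_torus_param: "pd (torus_param theta) y a = axis (torus_coord a) 1"
proof (rule pd_eqI)
  have "torus_param theta (y + s *\<^sub>R axis a 1) = torus_param theta y + s *\<^sub>R axis (torus_coord a) 1" for s
    using exhaust_2[of a] by (auto simp: vec_eq_iff forall_3 torus_param_def axis_def torus_coord_def)
  then show "((\<lambda>s. torus_param theta (y + s *\<^sub>R axis a 1)) has_vector_derivative axis (torus_coord a) 1) (at 0)"
    by (auto intro!: derivative_eq_intros)
qed

lemma sframe_torus_param:
  "sframe hopf_chart (torus_param theta) y = (\<lambda>a. pd hopf_chart (torus_param theta y) (torus_coord a))"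
  by (rule ext) (simp add: sframe_def push_def pd_torus_param sum_axis_scaleR)

lemma covd_torus_param_normal:
  assumes "la \<noteq> 0" "mu \<noteq> 0" "sin theta \<noteq> 0" "cos theta \<noteq> 0"
  shows "covd (berger_metric la mu mu) hopf_chart (torus_param theta) y a b $ 1 =
    - torus_gram (berger_hopf_gram_deriv la mu theta) $ a $ b / (2 * mu^2)"
proof -
  let ?\<Gamma> = "christoffel (berger_metric la mu mu) hopf_chart (torus_param theta y) 1"
  have "covd (berger_metric la mu mu) hopf_chart (torus_param theta) y a b $ 1 =
      (\<Sum>i\<in>UNIV. \<Sum>j\<in>UNIV. ?\<Gamma> i j * (axis (torus_coord a) 1 $ i) * (axis (torus_coord b) 1 $ j))"
    unfolding covd_def pd_torus_param pd_const by simp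
  also have "\<dots> = ?\<Gamma> (torus_coord a) (torus_coord b)"
    by (simp only: sum_mult_axis)
  finally show ?thesis
    using christoffel_berger_hopf_normal[of la mu "torus_param theta y"] assms by (simp add: torus_gram_def)
qed

lemma normal_part_hopf:
  assumes "la \<noteq> 0" "mu \<noteq> 0"
  shows "normal_part (berger_metric la mu mu) (hopf_chart x) (\<lambda>a. pd hopf_chart x (torus_coord a))
      (push hopf_chart x v) = v$1 *\<^sub>R pd hopf_chart x 1"
proof (rule normal_part_unique[OF bilinear_berger_metric])
  show "\<And>w. berger_metric la mu mu (hopf_chart x) w w = 0 \<Longrightarrow> w = 0"
    using berger_metric_pos_def[OF assms assms(2) hopf_chart_in_S3] .
  show "\<forall>a. berger_metric la mu mu (hopf_chart x) (v$1 *\<^sub>R pd hopf_chart x 1) (pd hopf_chart x (torus_coord a)) = 0"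
    by (simp add: bilinear_lmul[OF bilinear_berger_metric] berger_metric_hopf_frame
        berger_hopf_gram_normal_row_col torus_coord_def)
  have "push hopf_chart x v = v$1 *\<^sub>R pd hopf_chart x 1 + v$2 *\<^sub>R pd hopf_chart x 2 + v$3 *\<^sub>R pd hopf_chart x 3"
    by (simp add: push_def sum_3)
  moreover have "(\<Sum>a\<in>UNIV. (vector [v$2, v$3] $ a) *\<^sub>R pd hopf_chart x (torus_coord a)) =
      v$2 *\<^sub>R pd hopf_chart x 2 + v$3 *\<^sub>R pd hopf_chart x 3"
    by (simp add: sum_2 torus_coord_def)
  ultimately show "\<exists>c::real^2. push hopf_chart x v - v$1 *\<^sub>R pd hopf_chart x 1 =
      (\<Sum>a\<in>UNIV. (c $ a) *\<^sub>R pd hopf_chart x (torus_coord a))"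
    by (intro exI[of _ "vector [v$2, v$3]"]) simp
qed

lemma sff_torus_param:
  assumes "la \<noteq> 0" "mu \<noteq> 0" "sin theta \<noteq> 0" "cos theta \<noteq> 0"
  shows "sff (berger_metric la mu mu) hopf_chart (torus_param theta) y a b =
    (- torus_gram (berger_hopf_gram_deriv la mu theta) $ a $ b / (2 * mu^2))
      *\<^sub>R pd hopf_chart (torus_param theta y) 1"
  unfolding sff_def sframe_torus_param normal_part_hopf[OF assms(1,2)] covd_torus_param_normal[OF assms] ..

lemma mean_curv_torus_param:
  assumes "la \<noteq> 0" "mu \<noteq> 0" "sin theta \<noteq> 0" "cos theta \<noteq> 0"
  defines "N \<equiv> torus_gram (berger_hopf_gram_deriv la mu theta)"
  shows "mean_curv (berger_metric la mu mu) hopf_chart (torus_param theta) y c d =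
    (- (\<Sum>a\<in>UNIV. \<Sum>b\<in>UNIV. (c$a * c$b + d$a * d$b) * N$a$b) / (4 * mu^2))
      *\<^sub>R pd hopf_chart (torus_param theta y) 1"
proof -
  have "mean_curv (berger_metric la mu mu) hopf_chart (torus_param theta) y c d =
      ((1/2) * (\<Sum>a\<in>UNIV. \<Sum>b\<in>UNIV. (c$a * c$b + d$a * d$b) * (- N$a$b / (2 * mu^2))))
        *\<^sub>R pd hopf_chart (torus_param theta y) 1"
    unfolding mean_curv_def sff_torus_param[OF assms(1-4)] N_def
    by (simp only: scaleR_scaleR scaleR_sum_left[symmetric])
  also have "(1/2) * (\<Sum>a\<in>UNIV. \<Sum>b\<in>UNIV. (c$a * c$b + d$a * d$b) * (- N$a$b / (2 * mu^2))) =
      - (\<Sum>a\<in>UNIV. \<Sum>b\<in>UNIV. (c$a * c$b + d$a * d$b) * N$a$b) / (4 * mu^2)"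
    by (simp add: sum_distrib_left sum_divide_distrib flip: sum_negf)
  finally show ?thesis .
qed

lemma berger_metric_torus_frame:
  "berger_metric la mu mu (hopf_chart (torus_param theta y))
      (\<Sum>a\<in>UNIV. (c $ a) *\<^sub>R sframe hopf_chart (torus_param theta) y a)
      (\<Sum>b\<in>UNIV. (d $ b) *\<^sub>R sframe hopf_chart (torus_param theta) y b) =
    (\<Sum>a\<in>UNIV. \<Sum>b\<in>UNIV. c$a * d$b * torus_gram (berger_hopf_gram la mu theta) $ a $ b)"
  unfolding sframe_torus_param bilinear_sum[OF bilinear_berger_metric] sum.cartesian_product torus_gram_def
  by (rule sum.cong) (auto simp: bilinear_lmul[OF bilinear_berger_metric] bilinear_rmul[OF bilinear_berger_metric]
      berger_metric_hopf_frame)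

lemma norm_mean_curv_torus_param:
  assumes la: "la > 0" and mu: "mu > 0" and theta: "0 < theta" "theta < pi/2"
  defines "M \<equiv> torus_gram (berger_hopf_gram la mu theta)"
  assumes orth: "(\<Sum>a\<in>UNIV. \<Sum>b\<in>UNIV. c$a * c$b * M$a$b) = 1"
    "(\<Sum>a\<in>UNIV. \<Sum>b\<in>UNIV. d$a * d$b * M$a$b) = 1"
    "(\<Sum>a\<in>UNIV. \<Sum>b\<in>UNIV. c$a * d$b * M$a$b) = 0"
  shows "sqrt (berger_metric la mu mu (hopf_chart (torus_param theta y))
      (mean_curv (berger_metric la mu mu) hopf_chart (torus_param theta) y c d)
      (mean_curv (berger_metric la mu mu) hopf_chart (torus_param theta) y c d))
    = \<bar>cot (2 * theta)\<bar> / mu"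
proof -
  have nz: "la \<noteq> 0" "mu \<noteq> 0" "sin theta \<noteq> 0" "cos theta \<noteq> 0"
    using la mu theta sin_gt_zero[of theta] cos_gt_zero[of theta] by auto
  let ?G = "berger_metric la mu mu (hopf_chart (torus_param theta y))"
  let ?P = "pd hopf_chart (torus_param theta y) 1"
  let ?H = "mean_curv (berger_metric la mu mu) hopf_chart (torus_param theta) y c d"
  have "(\<Sum>a\<in>UNIV. \<Sum>b\<in>UNIV. (c$a * c$b + d$a * d$b) * torus_gram (berger_hopf_gram_deriv la mu theta) $ a $ b)
      = 4 * cot (2 * theta)"
    using orthonormal_pair_trace[OF torus_gram_berger_hopf_commute orth[unfolded M_def]]
      berger_hopf_torus_log_det_deriv[OF nz] by simp
  then have H: "?H = (- cot (2 * theta) / mu^2) *\<^sub>R ?P"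
    unfolding mean_curv_torus_param[OF nz] by simp
  have "?G ?P ?P = mu^2"
    unfolding berger_metric_hopf_frame by (simp add: berger_hopf_gram_normal_row_col)
  then have "?G ?H ?H = (cot (2 * theta) / mu)^2"
    unfolding H using mu
    by (simp add: bilinear_lmul[OF bilinear_berger_metric] bilinear_rmul[OF bilinear_berger_metric]
        bilinear_lneg[OF bilinear_berger_metric] bilinear_rneg[OF bilinear_berger_metric] power2_eq_square)
  then show ?thesis
    using mu by simp
qed

lemma const_mean_curv_norm_torus_param_iff:
  assumes la: "la > 0" and mu: "mu > 0" and theta: "theta \<in> {0<..<pi/2}"
  shows "const_mean_curv_norm (berger_metric la mu mu) hopf_chart (torus_param theta) C \<longleftrightarrow>
    \<bar>cot (2 * theta)\<bar> / mu = C"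
proof
  assume "\<bar>cot (2 * theta)\<bar> / mu = C"
  then show "const_mean_curv_norm (berger_metric la mu mu) hopf_chart (torus_param theta) C"
    unfolding const_mean_curv_norm_def Let_def berger_metric_torus_frame
    using norm_mean_curv_torus_param[OF la mu] theta by auto
next
  assume const: "const_mean_curv_norm (berger_metric la mu mu) hopf_chart (torus_param theta) C"
  have nz: "la \<noteq> 0" "mu \<noteq> 0" "sin theta \<noteq> 0" "cos theta \<noteq> 0"
    using la mu theta sin_gt_zero[of theta] cos_gt_zero[of theta] by auto
  obtain c d :: "real^2" where
    "(\<Sum>a\<in>UNIV. \<Sum>b\<in>UNIV. c$a * c$b * torus_gram (berger_hopf_gram la mu theta) $ a $ b) = 1"
    "(\<Sum>a\<in>UNIV. \<Sum>b\<in>UNIV. d$a * d$b * torus_gram (berger_hopf_gram la mu theta) $ a $ b) = 1"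
    "(\<Sum>a\<in>UNIV. \<Sum>b\<in>UNIV. c$a * d$b * torus_gram (berger_hopf_gram la mu theta) $ a $ b) = 0"
    using exists_orthonormal_pair[OF torus_gram_berger_hopf_commute(1) torus_gram_berger_hopf_pos[OF nz]]
    by blast
  with const show "\<bar>cot (2 * theta)\<bar> / mu = C"
    unfolding const_mean_curv_norm_def Let_def berger_metric_torus_frame
    using norm_mean_curv_torus_param[OF la mu, of theta c d 0] theta by auto
qed

lemma torus_param_const_mean_curv_norm_set:
  assumes "la > 0" "mu > 0" "C \<ge> 0"
  shows "{theta \<in> {0<..<pi/2}. const_mean_curv_norm (berger_metric la mu mu) hopf_chart (torus_param theta) C}
    = {(pi/2 - arctan (mu * C)) / 2, (pi/2 + arctan (mu * C)) / 2}"
proof -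
  have "{theta \<in> {0<..<pi/2}. const_mean_curv_norm (berger_metric la mu mu) hopf_chart (torus_param theta) C}
      = {theta \<in> {0<..<pi/2}. \<bar>cot (2 * theta)\<bar> = mu * C}"
    using const_mean_curv_norm_torus_param_iff[OF assms(1,2)] assms(2)
    by (auto simp: divide_eq_eq mult.commute)
  also have "\<dots> = {(pi/2 - arctan (mu * C)) / 2, (pi/2 + arctan (mu * C)) / 2}"
    using assms(2,3) by (intro abs_cot_double_solutions) simp
  finally show ?thesis .
qed

theorem mainTheorem3:
  fixes la mu nu C :: real
  assumes "la > 0" and "mu > 0" and "nu = mu" and "C \<ge> 0"
  shows "(C = 0 \<longrightarrow> (\<exists>!theta. theta \<in> {0<..<pi/2} \<and>
            const_mean_curv_norm (berger_metric la mu nu) hopf_chart (torus_param theta) C))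
       \<and> (C > 0 \<longrightarrow> card {theta \<in> {0<..<pi/2}.
            const_mean_curv_norm (berger_metric la mu nu) hopf_chart (torus_param theta) C} = 2)"
  unfolding assms(3)
proof (intro conjI impI)
  assume "C = 0"
  then have "{theta \<in> {0<..<pi/2}. const_mean_curv_norm (berger_metric la mu mu) hopf_chart (torus_param theta) C}
      = {pi/4}"
    unfolding torus_param_const_mean_curv_norm_set[OF assms(1,2,4)] by simp
  then show "\<exists>!theta. theta \<in> {0<..<pi/2} \<and>
      const_mean_curv_norm (berger_metric la mu mu) hopf_chart (torus_param theta) C"
    by (metis (no_types, lifting) mem_Collect_eq singleton_iff)
next
  assume "C > 0"
  then have "(pi/2 - arctan (mu * C)) / 2 \<noteq> (pi/2 + arctan (mu * C)) / 2"
    using assms(2) by simp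
  then show "card {theta \<in> {0<..<pi/2}.
      const_mean_curv_norm (berger_metric la mu mu) hopf_chart (torus_param theta) C} = 2"
    unfolding torus_param_const_mean_curv_norm_set[OF assms(1,2,4)] by simp
qed

end
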